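(* Let $A$ be a deterministic max-finding algorithm that makes $O(n)$ comparisons on $n$ elements. Then $A$ has error at least $\log_2\log_2 n - O(1)$.
   Context: Model of imprecise comparisons: there are $n$ elements, each with a fixed unknown real value; we identify an element with its value. Asked to compare $x_i$ and $x_j$, the comparator answers either "$x_i \ge x_j$" or "$x_j \ge x_i$". If $|x_i-x_j|>1$ the answer is correct; if $|x_i-x_j|\le 1$ the answer is arbitrary (possibly adversarial and adaptive). The error of a max-finding algorithm (on inputs of size $n$) is the smallest $k$ such that for every input and every consistent comparator behaviour its output $x$ satisfies $x \ge x^*-k$, where $x^*$ is the maximum value of an input element. *)

theory Defs
  imports Complex_Main
begin

text \<open>A deterministic comparison algorithm on n elements (indices 0..n-1) is a
decision tree.  Node i j l r: compare x_i with x_j; if the comparator answers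
"x_i \<ge> x_j" continue with l, otherwise with r.  Leaf k: run_output element k.\<close>

datatype dtree = Leaf nat | Node nat nat dtree dtree

fun wf_tree :: "nat \<Rightarrow> dtree \<Rightarrow> bool" where
  "wf_tree n (Leaf k) = (k < n)"
| "wf_tree n (Node i j l r) = (i < n \<and> j < n \<and> wf_tree n l \<and> wf_tree n r)"

fun depth :: "dtree \<Rightarrow> nat" where
  "depth (Leaf k) = 0"
| "depth (Node i j l r) = Suc (max (depth l) (depth r))"

text \<open>An adaptive comparator: its answer may depend on the whole history of
previous answers (True = "x_i \<ge> x_j").\<close>
type_synonym comparator = "bool list \<Rightarrow> bool"

fun run_output :: "comparator \<Rightarrow> bool list \<Rightarrow> dtree \<Rightarrow> nat" where
  "run_output f h (Leaf k) = k"
| "run_output f h (Node i j l r) =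
     (if f h then run_output f (h @ [True]) l else run_output f (h @ [False]) r)"

fun consistent :: "(nat \<Rightarrow> real) \<Rightarrow> comparator \<Rightarrow> bool list \<Rightarrow> dtree \<Rightarrow> bool" where
  "consistent x f h (Leaf k) = True"
| "consistent x f h (Node i j l r) =
     ((x i > x j + 1 \<longrightarrow> f h) \<and> (x j > x i + 1 \<longrightarrow> \<not> f h) \<and>
      (if f h then consistent x f (h @ [True]) l else consistent x f (h @ [False]) r))"

definition error_le :: "nat \<Rightarrow> dtree \<Rightarrow> real \<Rightarrow> bool" where
  "error_le n t k \<longleftrightarrow>
     (\<forall>x :: nat \<Rightarrow> real. \<forall>f. consistent x f [] t \<longrightarrow>
        x (run_output f [] t) \<ge> Max (x ` {..<n}) - k)"

end

theory Submission
  imports Defs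
begin

text \<open>The adversary answers every comparison in favour of the element that has won fewer
comparisons so far. If the algorithm outputs \<open>o\<close> and some element is not reachable from \<open>o\<close>
within \<open>K\<close> steps along winner-to-loser edges, the graph distance from \<open>o\<close> (capped at \<open>K + 1\<close>)
is an input consistent with all answers, so the error is at least \<open>K + 1\<close>. Under this adversary
an element that beat \<open>w\<close> while having fewer than \<open>D\<close> wins can be charged to a distinct value
below \<open>D\<close> of the win count of \<open>w\<close>, and at most \<open>m/D\<close> elements have \<open>D\<close> wins; optimising \<open>D\<close>
shows that after \<open>m\<close> comparisons the \<open>K\<close>-neighbourhood of \<open>o\<close> has at most
\<open>(25m) powr (1 - 2^-K)\<close> elements. With \<open>m = O(n)\<close> it covers all \<open>n\<close> elements only if
\<open>K \<ge> log\<^sub>2 log\<^sub>2 n - O(1)\<close>.\<close>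

section \<open>The adversary\<close>

text \<open>Outcomes of comparisons are recorded as (winner, loser) pairs.\<close>

definition wins :: "(nat \<times> nat) list \<Rightarrow> nat \<Rightarrow> nat" where
  "wins E v = length (filter (\<lambda>e. fst e = v) E)"

fun adv_run :: "(nat \<times> nat) list \<Rightarrow> dtree \<Rightarrow> nat \<times> (nat \<times> nat) list" where
  "adv_run E (Leaf k) = (k, E)"
| "adv_run E (Node i j l r) =
     (if wins E i \<le> wins E j then adv_run (E @ [(i, j)]) l else adv_run (E @ [(j, i)]) r)"

fun follow :: "dtree \<Rightarrow> bool list \<Rightarrow> dtree \<times> (nat \<times> nat) list" where
  "follow t [] = (t, [])"
| "follow (Leaf k) (b # h) = (Leaf k, [])"
| "follow (Node i j l r) (b # h) =
     (fst (follow (if b then l else r) h),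
      (if b then (i, j) else (j, i)) # snd (follow (if b then l else r) h))"

lemma follow_snoc:
  "fst (follow t h) = Node i j l r \<Longrightarrow>
   follow t (h @ [b]) = (if b then l else r, snd (follow t h) @ [if b then (i, j) else (j, i)])"
proof (induction h arbitrary: t)
  case Nil
  then show ?case by (cases b) auto
next
  case (Cons a h)
  then show ?case by (cases t) auto
qed

definition adversary :: "dtree \<Rightarrow> comparator" where
  "adversary t h =
     (case follow t h of
        (Node i j l r, E) \<Rightarrow> wins E i \<le> wins E j
      | (Leaf k, E) \<Rightarrow> True)"

definition outcomes_respect :: "(nat \<Rightarrow> real) \<Rightarrow> (nat \<times> nat) list \<Rightarrow> bool" where
  "outcomes_respect x E \<longleftrightarrow> (\<forall>(w, u) \<in> set E. x u \<le> x w + 1)"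

lemma adv_run_prefix: "\<exists>F. snd (adv_run E t) = E @ F"
  by (induction E t rule: adv_run.induct) force+

lemma length_adv_run: "length (snd (adv_run E t)) \<le> length E + depth t"
  by (induction E t rule: adv_run.induct) auto

lemma adversary_Node:
  assumes "follow t h = (Node i j l r, E)"
  shows "adversary t h \<longleftrightarrow> wins E i \<le> wins E j"
    and "follow t (h @ [True]) = (l, E @ [(i, j)])"
    and "follow t (h @ [False]) = (r, E @ [(j, i)])"
  using assms follow_snoc[of t h i j l r] by (auto simp: adversary_def)

lemma run_output_adversary:
  "follow t h = (s, E) \<Longrightarrow> run_output (adversary t) h s = fst (adv_run E s)"
proof (induction s arbitrary: h E)
  case (Node i j l r)
  then show ?case by (simp add: adversary_Node)
qed simp

lemma consistent_adversary:
  "follow t h = (s, E) \<Longrightarrow> outcomes_respect x (snd (adv_run E s)) \<Longrightarrow>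
   consistent x (adversary t) h s"
proof (induction s arbitrary: h E)
  case (Node i j l r)
  obtain F where F: "snd (adv_run (E @ [if wins E i \<le> wins E j then (i, j) else (j, i)])
                        (if wins E i \<le> wins E j then l else r))
                     = E @ [if wins E i \<le> wins E j then (i, j) else (j, i)] @ F"
    using adv_run_prefix by (metis append.assoc)
  from Node.prems(2) F have "\<not> x i > x j + 1" if "\<not> wins E i \<le> wins E j"
    using that by (auto simp: outcomes_respect_def)
  moreover from Node.prems(2) F have "\<not> x j > x i + 1" if "wins E i \<le> wins E j"
    using that by (auto simp: outcomes_respect_def)
  ultimately show ?case
    using Node.IH Node.prems by (auto simp: adversary_Node)
qed simp

lemma consistent_const: "consistent (\<lambda>_. c) f h t"
  by (induction t arbitrary: h) auto

lemma error_leD: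
  "error_le n t k \<Longrightarrow> consistent x f [] t \<Longrightarrow> Max (x ` {..<n}) - k \<le> x (run_output f [] t)"
  by (simp add: error_le_def)

lemma error_le_nonneg:
  assumes "error_le n t k" and "1 \<le> n"
  shows "0 \<le> k"
proof -
  have "(\<lambda>_. 0::real) ` {..<n} = {0}"
    using assms(2) by (intro image_constant[of 0]) simp
  moreover have "Max ((\<lambda>_. 0::real) ` {..<n}) - k \<le> 0"
    using error_leD[OF assms(1) consistent_const] .
  ultimately show ?thesis by simp
qed

section \<open>Neighbourhoods in the outcome graph\<close>

fun reach :: "(nat \<times> nat) list \<Rightarrow> nat \<Rightarrow> nat \<Rightarrow> nat set" where
  "reach E v 0 = {v}"
| "reach E v (Suc k) = reach E v k \<union> {u. \<exists>w \<in> reach E v k. (w, u) \<in> set E}"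

lemma reach_mono: "d \<le> d' \<Longrightarrow> reach E v d \<subseteq> reach E v d'"
  by (induction d') (auto simp: le_Suc_eq)

lemma center_in_reach: "v \<in> reach E v k"
  using reach_mono[of 0 k E v] by auto

lemma reach_subset: "reach E v k \<subseteq> insert v (snd ` set E)"
proof (induction k)
  case (Suc k)
  have "{u. \<exists>w \<in> reach E v k. (w, u) \<in> set E} \<subseteq> snd ` set E"
    by (auto intro: rev_image_eqI)
  with Suc show ?case by (simp only: reach.simps) blast
qed simp

lemma finite_reach: "finite (reach E v k)"
  by (rule finite_subset[OF reach_subset]) simp

lemma card_reach_ge_1: "1 \<le> card (reach E v k)"
  using center_in_reach[of v E k] finite_reach[of E v k] by (auto simp: Suc_le_eq card_gt_0_iff)

lemma card_reach_le: "card (reach E v k) \<le> Suc (length E)"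
proof -
  have "card (reach E v k) \<le> card (insert v (snd ` set E))"
    by (intro card_mono reach_subset) simp
  also have "\<dots> \<le> Suc (card (snd ` set E))"
    by (simp add: card_insert_if)
  also have "card (snd ` set E) \<le> length E"
    using card_image_le[of "set E" snd] card_length[of E] by simp
  finally show ?thesis by simp
qed

lemma capped_distance:
  obtains x :: "nat \<Rightarrow> real" where "outcomes_respect x E" and "x v = 0"
    and "\<And>u. u \<notin> reach E v K \<Longrightarrow> x u = real K + 1"
proof
  define d where "d u = (LEAST d. u \<in> reach E v d \<or> d = Suc K)" for u
  have d_le: "d u \<le> Suc K" for u
    unfolding d_def by (rule Least_le) simp
  have d_cases: "u \<in> reach E v (d u) \<or> d u = Suc K" for u
    unfolding d_def by (rule LeastI[of _ "Suc K"]) simp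
  have "d u \<le> Suc (d w)" if "(w, u) \<in> set E" for w u
  proof (cases "w \<in> reach E v (d w)")
    case True
    with that have "u \<in> reach E v (Suc (d w))" by auto
    then show ?thesis unfolding d_def[of u] by (simp add: Least_le)
  next
    case False
    then show ?thesis using d_cases[of w] d_le[of u] by simp
  qed
  then have "real (d u) \<le> real (d w) + 1" if "(w, u) \<in> set E" for w u
    using that by fastforce
  then show "outcomes_respect (\<lambda>u. real (d u)) E"
    by (auto simp: outcomes_respect_def)
  show "real (d v) = 0"
    unfolding d_def by (simp add: Least_eq_0)
  show "real (d u) = real K + 1" if "u \<notin> reach E v K" for u
  proof -
    have "d u \<noteq> Suc K \<Longrightarrow> d u \<le> K" using d_le[of u] by linarith
    then have "d u = Suc K"
      using d_cases[of u] reach_mono[of "d u" K E v] that by blast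
    then show ?thesis by simp
  qed
qed

lemma adversary_error:
  assumes "error_le n t k" and "v < n"
    and "v \<notin> reach (snd (adv_run [] t)) (fst (adv_run [] t)) K"
  shows "real K + 1 \<le> k"
proof -
  obtain x where x: "outcomes_respect x (snd (adv_run [] t))" "x (fst (adv_run [] t)) = 0"
    "\<And>u. u \<notin> reach (snd (adv_run [] t)) (fst (adv_run [] t)) K \<Longrightarrow> x u = real K + 1"
    using capped_distance[where E = "snd (adv_run [] t)" and v = "fst (adv_run [] t)" and K = K]
    by blast
  have start: "follow t [] = (t, [])" by simp
  have "Max (x ` {..<n}) - k \<le> x (run_output (adversary t) [] t)"
    using error_leD[OF assms(1) consistent_adversary[OF start x(1)]] .
  moreover have "run_output (adversary t) [] t = fst (adv_run [] t)"
    using run_output_adversary[OF start] .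
  moreover have "x v \<le> Max (x ` {..<n})"
    using assms(2) by (intro Max_ge) auto
  moreover have "x v = real K + 1"
    using x(3) assms(3) .
  ultimately show ?thesis using x(2) by simp
qed

section \<open>Growth of neighbourhoods\<close>

definition underdog_history :: "(nat \<times> nat) list \<Rightarrow> bool" where
  "underdog_history E \<longleftrightarrow>
     (\<forall>t < length E. wins (take t E) (fst (E ! t)) \<le> wins (take t E) (snd (E ! t)))"

lemma underdog_historyD:
  "underdog_history E \<Longrightarrow> t < length E \<Longrightarrow> E ! t = (w, u) \<Longrightarrow>
   wins (take t E) w \<le> wins (take t E) u"
  unfolding underdog_history_def by (drule spec[of _ t]) simp

lemma underdog_history_snoc:
  "underdog_history E \<Longrightarrow> wins E w \<le> wins E u \<Longrightarrow> underdog_history (E @ [(w, u)])"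
  unfolding underdog_history_def by (auto simp: nth_append less_Suc_eq)

lemma underdog_history_adv_run: "underdog_history E \<Longrightarrow> underdog_history (snd (adv_run E t))"
  by (induction E t rule: adv_run.induct) (simp_all add: underdog_history_snoc)

lemma wins_append: "wins (E @ F) v = wins E v + wins F v"
  by (simp add: wins_def)

lemma wins_take_le: "wins (take t E) v \<le> wins E v"
  using wins_append[of "take t E" "drop t E" v] by simp

lemma wins_take_mono: "a \<le> b \<Longrightarrow> wins (take a E) v \<le> wins (take b E) v"
  using wins_take_le[of a "take b E" v] by (simp add: min_def)

lemma wins_take_Suc:
  "t < length E \<Longrightarrow>
   wins (take (Suc t) E) v = wins (take t E) v + (if fst (E ! t) = v then 1 else 0)"
  by (simp add: take_Suc_conv_app_nth wins_append) (simp add: wins_def)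

lemma sum_wins_le: "sum (wins E) S \<le> length E"
proof (induction E)
  case (Cons e E)
  have "sum (wins (e # E)) S = sum (\<lambda>u. if fst e = u then 1 else 0) S + sum (wins E) S"
    unfolding sum.distrib[symmetric] by (rule sum.cong) (auto simp: wins_def)
  moreover have "sum (\<lambda>u. if fst e = u then 1::nat else 0) S \<le> 1"
    by (cases "finite S") (simp_all add: sum.delta')
  ultimately show ?case using Cons.IH by simp
qed (simp add: wins_def)

lemma finite_many_wins:
  assumes "1 \<le> D"
  shows "finite {u. D \<le> wins E u}"
proof (rule finite_subset)
  show "{u. D \<le> wins E u} \<subseteq> fst ` set E"
  proof
    fix u assume "u \<in> {u. D \<le> wins E u}"
    with assms have "filter (\<lambda>e. fst e = u) E \<noteq> []"
      by (auto simp: wins_def)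
    then show "u \<in> fst ` set E"
      by (auto simp: filter_empty_conv)
  qed
qed simp

lemma card_many_wins_le:
  assumes "1 \<le> D"
  shows "D * card {u. D \<le> wins E u} \<le> length E"
proof -
  let ?H = "{u. D \<le> wins E u}"
  have "finite ?H"
    using assms by (rule finite_many_wins)
  then have "D * card ?H \<le> sum (wins E) ?H"
    using sum_mono[of ?H "\<lambda>_. D" "wins E"] by (simp add: mult.commute)
  also have "\<dots> \<le> length E"
    by (rule sum_wins_le)
  finally show ?thesis .
qed

text \<open>Each such loser \<open>u\<close> is charged the number of wins of \<open>w\<close> before \<open>w\<close> first beat \<open>u\<close>,
which is below \<open>D\<close> by the underdog property; it is injective since \<open>w\<close> wins again each time.\<close>

lemma card_weak_losers_le:
  assumes "underdog_history E"
  shows "card {u. (w, u) \<in> set E \<and> wins E u < D} \<le> D"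
proof -
  let ?L = "{u. (w, u) \<in> set E \<and> wins E u < D}"
  define first where "first u = (LEAST t. t < length E \<and> E ! t = (w, u))" for u
  define g where "g u = wins (take (first u) E) w" for u
  have first: "first u < length E \<and> E ! first u = (w, u)" if "u \<in> ?L" for u
  proof -
    from that obtain t where "t < length E" "E ! t = (w, u)"
      by (auto simp: in_set_conv_nth)
    then show ?thesis
      unfolding first_def using LeastI[of "\<lambda>t. t < length E \<and> E ! t = (w, u)" t] by blast
  qed
  have g_less: "g u < D" if "u \<in> ?L" for u
  proof -
    have "g u \<le> wins (take (first u) E) u"
      unfolding g_def using first[OF that] by (blast intro: underdog_historyD[OF assms])
    also have "\<dots> \<le> wins E u"
      by (rule wins_take_le)
    finally show ?thesis using that by simp
  qed
  have g_mono: "g u < g u'" if "u \<in> ?L" "first u < first u'" for u u'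
  proof -
    have "g u + 1 = wins (take (Suc (first u)) E) w"
      using first[OF that(1)] wins_take_Suc[of "first u" E w] by (simp add: g_def)
    also have "\<dots> \<le> g u'"
      using wins_take_mono[of "Suc (first u)" "first u'" E w] that(2) by (simp add: g_def)
    finally show ?thesis by linarith
  qed
  have "inj_on g ?L"
  proof (rule inj_onI)
    fix u u' assume u: "u \<in> ?L" and u': "u' \<in> ?L" and "g u = g u'"
    show "u = u'"
    proof (cases "first u" "first u'" rule: linorder_cases)
      case less
      from g_mono[OF u less] \<open>g u = g u'\<close> show ?thesis by simp
    next
      case equal
      with first[OF u] first[OF u'] have "(w, u) = (w, u')" by argo
      then show ?thesis by simp
    next
      case greater
      from g_mono[OF u' greater] \<open>g u = g u'\<close> show ?thesis by simp
    qed
  qed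
  then have "card ?L = card (g ` ?L)"
    by (simp add: card_image)
  also have "\<dots> \<le> card {..<D}"
    by (rule card_mono) (auto intro: g_less)
  finally show ?thesis by simp
qed

text \<open>A new element of the next neighbourhood either has at least \<open>D\<close> wins or is a loser
with fewer than \<open>D\<close> wins to an element of the current one.\<close>

lemma card_reach_Suc_le:
  assumes "underdog_history E" and "1 \<le> D"
  shows "D * card (reach E v (Suc k)) \<le> D * (D + 1) * card (reach E v k) + length E"
proof -
  let ?B = "reach E v k"
  let ?H = "{u. D \<le> wins E u}"
  let ?L = "\<lambda>w. {u. (w, u) \<in> set E \<and> wins E u < D}"
  have "finite ?H"
    using assms(2) by (rule finite_many_wins)
  moreover have "finite (?L w)" for w
    by (rule finite_subset[of _ "snd ` set E"]) (auto intro: rev_image_eqI)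
  moreover have "reach E v (Suc k) \<subseteq> ?B \<union> ?H \<union> (\<Union>w \<in> ?B. ?L w)"
  proof
    fix u assume "u \<in> reach E v (Suc k)"
    then consider "u \<in> ?B" | w where "w \<in> ?B" "(w, u) \<in> set E"
      by auto
    then show "u \<in> ?B \<union> ?H \<union> (\<Union>w \<in> ?B. ?L w)"
      by cases (auto simp: not_le)
  qed
  ultimately have "card (reach E v (Suc k)) \<le> card (?B \<union> ?H \<union> (\<Union>w \<in> ?B. ?L w))"
    by (intro card_mono finite_UnI finite_UN_I finite_reach)
  also have "\<dots> \<le> card ?B + card ?H + card (\<Union>w \<in> ?B. ?L w)"
    using card_Un_le[of "?B \<union> ?H" "\<Union>w \<in> ?B. ?L w"] card_Un_le[of ?B ?H] by linarith
  also have "card (\<Union>w \<in> ?B. ?L w) \<le> (\<Sum>w \<in> ?B. card (?L w))"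
    by (rule card_UN_le) (rule finite_reach)
  also have "\<dots> \<le> card ?B * D"
    using sum_bounded_above[of ?B "\<lambda>w. card (?L w)" D] card_weak_losers_le[OF assms(1)] by simp
  finally have "D * card (reach E v (Suc k)) \<le> D * (card ?B + card ?H + card ?B * D)"
    by simp
  also have "\<dots> = D * (D + 1) * card ?B + D * card ?H"
    by (simp add: algebra_simps)
  finally show ?thesis
    using card_many_wins_le[OF assms(2), of E] by linarith
qed

text \<open>Optimising over \<open>D \<approx> \<surd>(m/b)\<close>.\<close>

lemma tradeoff_le_sqrt:
  fixes m b b' :: nat
  assumes "1 \<le> m" and "1 \<le> b" and "b \<le> 2 * m"
    and tradeoff: "\<And>D. 1 \<le> D \<Longrightarrow> D * b' \<le> D * (D + 1) * b + m"
  shows "real b' \<le> sqrt (25 * real m * real b)"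
proof -
  define r where "r = sqrt (real m)"
  define q where "q = sqrt (real b)"
  have r: "r > 0" "r * r = real m"
    using assms(1) by (simp_all add: r_def)
  have q: "q > 0" "q * q = real b"
    using assms(2) by (simp_all add: q_def)
  define D where "D = nat \<lceil>r / q\<rceil>"
  have "r / q > 0"
    using r q by simp
  then have D: "r / q \<le> real D" "real D < r / q + 1" "1 \<le> D"
    unfolding D_def by linarith+
  have "real (D * b') \<le> real (D * (D + 1) * b + m)"
    using tradeoff[OF D(3)] by (simp only: of_nat_le_iff)
  then have "real D * real b' \<le> real D * ((real D + 1) * real b + real m / real D)"
    using D(3) by (simp add: algebra_simps)
  then have "real b' \<le> (real D + 1) * real b + real m / real D"
    using D(3) by simp
  also have "(real D + 1) * real b \<le> r * q + 2 * (q * q)"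
  proof -
    have "(real D + 1) * real b \<le> (r / q + 2) * (q * q)"
      unfolding q(2) using D(2) by (intro mult_right_mono) auto
    also have "\<dots> = r * q + 2 * (q * q)"
      using q(1) by (simp add: field_simps)
    finally show ?thesis .
  qed
  also have "real m / real D \<le> r * q"
  proof -
    have "real m / real D \<le> real m / (r / q)"
      using D \<open>r / q > 0\<close> by (intro divide_left_mono mult_pos_pos) auto
    also have "\<dots> = r * q"
      using r q by (simp add: field_simps)
    finally show ?thesis .
  qed
  also have "2 * (q * q) \<le> 3 * (r * q)"
  proof -
    have "q\<^sup>2 \<le> (3 / 2 * r)\<^sup>2"
      using q(2) r(2) assms(3) by (simp add: power2_eq_square)
    then have "q \<le> 3 / 2 * r"
      by (rule power2_le_imp_le) (use r in simp)
    then show ?thesis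
      using q(1) by (simp add: mult_right_mono)
  qed
  finally have "real b' \<le> 5 * (r * q)"
    by (simp add: mult.commute)
  also have "\<dots> = sqrt (25 * real m * real b)"
    by (simp add: r_def q_def real_sqrt_mult)
  finally show ?thesis .
qed

lemma card_reach_le_powr:
  assumes "underdog_history E" and "E \<noteq> []"
  shows "real (card (reach E v K)) \<le> (25 * real (length E)) powr (1 - (1/2)^K)"
proof (induction K)
  case 0
  then show ?case using assms(2) by simp
next
  case (Suc K)
  define m where "m = length E"
  define b where "b = card (reach E v K)"
  define y where "y = 25 * real m"
  have "1 \<le> m"
    using assms(2) by (simp add: m_def Suc_le_eq)
  then have "y > 0"
    by (simp add: y_def)
  have "1 \<le> b" "b \<le> 2 * m"
    using card_reach_ge_1 card_reach_le[of E v K] \<open>1 \<le> m\<close> by (simp_all add: b_def m_def)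
  then have "real (card (reach E v (Suc K))) \<le> sqrt (y * real b)"
    using tradeoff_le_sqrt[OF \<open>1 \<le> m\<close>] card_reach_Suc_le[OF assms(1)]
    by (simp add: y_def b_def m_def mult.assoc)
  also have "\<dots> \<le> sqrt (y * y powr (1 - (1/2)^K))"
    using Suc.IH \<open>y > 0\<close> by (simp add: b_def y_def m_def)
  also have "y * y powr (1 - (1/2)^K) = y powr (2 - (1/2)^K)"
    using powr_add[of y 1 "1 - (1/2)^K"] \<open>y > 0\<close> by simp
  also have "sqrt (y powr (2 - (1/2)^K)) = y powr ((2 - (1/2)^K) / 2)"
    using \<open>y > 0\<close> by (simp add: powr_half_sqrt_powr)
  also have "(2 - (1/2)^K) / 2 = 1 - (1/2::real)^Suc K"
    by simp
  finally show ?case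
    by (simp add: y_def m_def)
qed

lemma log_log_le_of_powr_le:
  fixes x a :: real
  assumes "1 < x" and "x powr ((1/2)^K) \<le> a"
  shows "log 2 (log 2 x) \<le> real K + log 2 (log 2 a)"
proof -
  have "0 < log 2 x"
    using assms(1) by simp
  have "1 < x powr ((1/2)^K)"
    using powr_less_mono[of 0 "(1/2)^K" x] assms(1) by simp
  then have "1 < a"
    using assms(2) by linarith
  have "(1/2)^K * log 2 x = log 2 (x powr ((1/2)^K))"
    by (simp add: log_powr)
  also have "\<dots> \<le> log 2 a"
    using \<open>1 < x powr ((1/2)^K)\<close> assms(2) by (subst log_le_cancel_iff) auto
  finally have "log 2 x \<le> 2^K * log 2 a"
    by (simp add: power_one_over field_simps)
  then have "log 2 (log 2 x) \<le> log 2 (2^K * log 2 a)"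
    using \<open>0 < log 2 x\<close> by simp
  also have "\<dots> = real K + log 2 (log 2 a)"
    using \<open>1 < a\<close> by (simp add: log_mult_pos log_nat_power)
  finally show ?thesis .
qed

lemma log_log_le_of_cover:
  assumes "underdog_history E" and "{..<n} \<subseteq> reach E v K" and "2 \<le> n"
    and "real (length E) \<le> C * real n"
  shows "log 2 (log 2 (real n)) - log 2 (log 2 (25 * C)) \<le> real K"
proof -
  define y where "y = 25 * real (length E)"
  define e :: real where "e = (1/2)^K"
  have "n \<le> card (reach E v K)"
    using card_mono[OF finite_reach assms(2)] by simp
  then have "2 \<le> Suc (length E)"
    using card_reach_le[of E v K] assms(3) by linarith
  then have "E \<noteq> []" and "1 \<le> y"
    by (auto simp: y_def)
  have "0 < e" "e \<le> 1"
    by (simp_all add: e_def power_le_one)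
  have n_le: "real n \<le> y powr (1 - e)"
    using \<open>n \<le> card (reach E v K)\<close> card_reach_le_powr[OF assms(1) \<open>E \<noteq> []\<close>, of v K]
    unfolding y_def e_def by linarith
  also have "\<dots> \<le> y powr 1"
    using \<open>1 \<le> y\<close> \<open>0 < e\<close> by (intro powr_mono) auto
  finally have "real n \<le> y"
    using \<open>1 \<le> y\<close> by simp
  have "real n * y powr e \<le> y powr (1 - e) * y powr e"
    using n_le by (simp add: mult_right_mono)
  also have "\<dots> = y"
    using \<open>1 \<le> y\<close> by (simp add: powr_add[symmetric])
  also have "\<dots> \<le> 25 * C * real n"
    using assms(4) by (simp add: y_def)
  finally have "y powr e \<le> 25 * C"
    using assms(3) by (simp add: mult.commute)
  then have "real n powr e \<le> 25 * C"
    using powr_mono2[of e "real n" y] \<open>real n \<le> y\<close> \<open>0 < e\<close> by simp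
  then show ?thesis
    using log_log_le_of_powr_le[of "real n" K "25 * C"] assms(3) unfolding e_def by simp
qed

lemma le_of_nat_dichotomy:
  fixes L k :: real
  assumes "\<And>K :: nat. L \<le> real K \<or> real K + 1 \<le> k" and "0 \<le> k"
  shows "L \<le> k"
proof (cases "L \<le> 0")
  case False
  define K where "K = nat \<lceil>L\<rceil> - 1"
  have "real K < L" "L \<le> real K + 1"
    using False unfolding K_def by linarith+
  then show ?thesis
    using assms(1)[of K] by linarith
qed (use assms(2) in linarith)

lemma error_lower_bound:
  assumes "2 \<le> n" and "real (depth t) \<le> C * real n" and "error_le n t k"
  shows "log 2 (log 2 (real n)) - log 2 (log 2 (25 * C)) \<le> k"
proof (rule le_of_nat_dichotomy)
  define E where "E = snd (adv_run [] t)"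
  have "underdog_history E"
    unfolding E_def by (rule underdog_history_adv_run) (simp add: underdog_history_def)
  moreover have "real (length E) \<le> C * real n"
    using length_adv_run[of "[]" t] assms(2) unfolding E_def by simp
  ultimately show "log 2 (log 2 (real n)) - log 2 (log 2 (25 * C)) \<le> real K \<or> real K + 1 \<le> k"
    for K
    using log_log_le_of_cover[OF _ _ assms(1)] adversary_error[OF assms(3)]
    unfolding E_def by blast
  show "0 \<le> k"
    using error_le_nonneg[OF assms(3)] assms(1) by simp
qed

theorem mainTheorem18:
  fixes A :: "nat \<Rightarrow> dtree"
  assumes wf: "\<And>n. n \<ge> 1 \<Longrightarrow> wf_tree n (A n)"
    and lin: "\<exists>C N. \<forall>n\<ge>N. real (depth (A n)) \<le> C * real n"
  shows "\<exists>c N. \<forall>n\<ge>N. \<forall>k. error_le n (A n) k \<longrightarrow> k \<ge> log 2 (log 2 (real n)) - c"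
proof -
  obtain C N where "\<forall>n\<ge>N. real (depth (A n)) \<le> C * real n"
    using lin by blast
  then have "\<forall>n\<ge>max N 2. \<forall>k. error_le n (A n) k \<longrightarrow>
      k \<ge> log 2 (log 2 (real n)) - log 2 (log 2 (25 * C))"
    using error_lower_bound by auto
  then show ?thesis by blast
qed

end
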